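(* Let $P\subset\mathbb{R}^d$ be a polytope inscribed into a sphere centered at the origin and let $v$ be a vertex of $P$. Then the neighbors of $v$ in the graph of $P$ are exactly the points $s_W(v)$, where $W$ ranges over the walls of the normal cone $N_vP$.
   Context: The normal cone of a vertex $v$ is $N_vP=\{c\in\mathbb{R}^d: \langle c,v\rangle\ge\langle c,y\rangle \ \forall y\in P\}$. In the (full-dimensional) normal fan of $P$, a wall is a cone of dimension $d-1$; a wall of $N_vP$ is a $(d-1)$-dimensional face of it. For a wall $W$ with linear span $\{x:\langle\alpha,x\rangle=0\}$, $s_W(x)=x-2\frac{\langle\alpha,x\rangle}{\langle\alpha,\alpha\rangle}\alpha$ is the reflection in that hyperplane. *)

theory Defs
  imports "HOL-Analysis.Analysis"
begin

definition normal_cone :: "'a::euclidean_space set \<Rightarrow> 'a \<Rightarrow> 'a set" where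
  "normal_cone P v = {c. \<forall>y\<in>P. c \<bullet> y \<le> c \<bullet> v}"

definition is_wall :: "'a::euclidean_space set \<Rightarrow> 'a set \<Rightarrow> bool" where
  "is_wall C W \<longleftrightarrow> W face_of C \<and> aff_dim W = int DIM('a) - 1"

definition wall_reflection :: "'a::euclidean_space set \<Rightarrow> 'a \<Rightarrow> 'a" where
  "wall_reflection W x =
     (let \<alpha> = (SOME \<alpha>. \<alpha> \<noteq> 0 \<and> span W = {y. \<alpha> \<bullet> y = 0})
      in x - (2 * (\<alpha> \<bullet> x) / (\<alpha> \<bullet> \<alpha>)) *\<^sub>R \<alpha>)"

definition graph_neighbors :: "'a::euclidean_space set \<Rightarrow> 'a \<Rightarrow> 'a set" where
  "graph_neighbors P v =
     {u. u extreme_point_of P \<and> u \<noteq> v \<and> closed_segment v u face_of P}"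

end

theory Submission
  imports Defs
begin

(*
  Write P as the convex hull of its finite vertex set V. The normal cone N of v is then the
  polyhedral cone of all c with c . y <= c . v for y in V, and it is full-dimensional because
  v is an exposed point.

  A wall W of N spans a hyperplane H = {x. a . x = 0}. A point c in the relative interior of W
  exposes a face F of P, and for every vertex y of F the vector y - v is parallel to a: the
  functional y - v is <= 0 on W and vanishes at a relative interior point of W, hence on all
  of H. All vertices lie on a sphere through v, and a line through v meets it only in v and
  in the reflection of v in H; so F is the edge [v, s_W(v)]. F is not just {v}, because c lies
  on the boundary of N.

  Conversely, if [v, u] is an edge exposed by c, then c lies in the relative interior of
  N \<inter> {x. (u - v) . x = 0}, which is therefore a wall, and the reflection in this hyperplane
  maps v to u because |u| = |v|.
*)

lemma perp_hyperplane_imp_parallel: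
  fixes a x :: "'a::euclidean_space"
  assumes "a \<noteq> 0" "\<And>h. a \<bullet> h = 0 \<Longrightarrow> h \<bullet> x = 0"
  shows "x = ((x \<bullet> a) / (a \<bullet> a)) *\<^sub>R a"
proof -
  define w where "w = x - ((x \<bullet> a) / (a \<bullet> a)) *\<^sub>R a"
  have "a \<bullet> w = 0"
    using assms(1) by (simp add: w_def inner_diff_right inner_commute)
  then have "w \<bullet> x = 0" "w \<bullet> a = 0"
    using assms(2) by (auto simp: inner_commute)
  then have "w \<bullet> w = 0"
    by (simp add: w_def inner_diff_right)
  then show ?thesis
    by (simp add: w_def)
qed

lemma reflection_of_equal_norm:
  fixes a u v :: "'a::euclidean_space"
  assumes "a \<noteq> 0" "u - v = k *\<^sub>R a" "norm u = norm v" "u \<noteq> v"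
  shows "u = v - (2 * (a \<bullet> v) / (a \<bullet> a)) *\<^sub>R a"
proof -
  have u: "u = v + k *\<^sub>R a"
    using assms(2) by (simp add: algebra_simps)
  then have "k \<noteq> 0"
    using assms(4) by auto
  have "(v + k *\<^sub>R a) \<bullet> (v + k *\<^sub>R a) = v \<bullet> v"
    using assms(3) u by (simp add: dot_square_norm)
  then have "k * (2 * (a \<bullet> v) + k * (a \<bullet> a)) = 0"
    by (simp add: inner_add_left inner_add_right algebra_simps inner_commute)
  then have "2 * (a \<bullet> v) + k * (a \<bullet> a) = 0"
    using \<open>k \<noteq> 0\<close> by simp
  then have "k = - 2 * (a \<bullet> v) / (a \<bullet> a)"
    using assms(1) by (simp add: field_simps)
  then show ?thesis
    using u by simp
qed

lemma wall_reflection_eq: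
  fixes a :: "'a::euclidean_space"
  assumes "a \<noteq> 0" "span W = {y. a \<bullet> y = 0}"
  shows "wall_reflection W x = x - (2 * (a \<bullet> x) / (a \<bullet> a)) *\<^sub>R a"
proof -
  define \<alpha> where "\<alpha> = (SOME \<alpha>. \<alpha> \<noteq> 0 \<and> span W = {y. \<alpha> \<bullet> y = 0})"
  have "\<alpha> \<noteq> 0 \<and> span W = {y. \<alpha> \<bullet> y = 0}"
    unfolding \<alpha>_def by (rule someI[of _ a]) (use assms in auto)
  then have \<alpha>: "\<alpha> \<noteq> 0" "{y. \<alpha> \<bullet> y = 0} = {y. a \<bullet> y = 0}"
    using assms(2) by auto
  define k where "k = (\<alpha> \<bullet> a) / (a \<bullet> a)"
  have "\<alpha> = k *\<^sub>R a"
    unfolding k_def by (rule perp_hyperplane_imp_parallel) (use assms(1) \<alpha>(2) in \<open>auto simp: inner_commute\<close>)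
  then have "k \<noteq> 0"
    using \<alpha>(1) by auto
  have "wall_reflection W x = x - (2 * (\<alpha> \<bullet> x) / (\<alpha> \<bullet> \<alpha>)) *\<^sub>R \<alpha>"
    unfolding wall_reflection_def Let_def \<alpha>_def ..
  also have "\<dots> = x - (2 * (a \<bullet> x) / (a \<bullet> a)) *\<^sub>R a"
    using \<open>\<alpha> = k *\<^sub>R a\<close> \<open>k \<noteq> 0\<close> by (simp add: power2_eq_square)
  finally show ?thesis .
qed

lemma affine_hull_eq_hyperplane:
  fixes a :: "'a::euclidean_space"
  assumes "W \<subseteq> {x. a \<bullet> x = 0}" "a \<noteq> 0" "aff_dim W = int DIM('a) - 1"
  shows "affine hull W = {x. a \<bullet> x = 0}"
proof (rule affine_dim_equal)
  show "affine hull W \<subseteq> {x. a \<bullet> x = 0}"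
    by (intro hull_minimal assms(1) affine_hyperplane)
  show "affine hull W \<noteq> {}"
    using assms(3) by auto
qed (use assms in \<open>simp_all add: affine_hyperplane\<close>)

lemma span_eq_hyperplane:
  fixes a :: "'a::euclidean_space"
  assumes "W \<subseteq> {x. a \<bullet> x = 0}" "a \<noteq> 0" "aff_dim W = int DIM('a) - 1"
  shows "span W = {x. a \<bullet> x = 0}"
proof
  show "span W \<subseteq> {x. a \<bullet> x = 0}"
    using span_mono[OF assms(1)] subspace_hyperplane span_eq_iff by metis
  show "{x. a \<bullet> x = 0} \<subseteq> span W"
    using affine_hull_eq_hyperplane[OF assms] affine_hull_subset_span by metis
qed

lemma normal_cone_convex_hull:
  "normal_cone (convex hull S) v = {c. \<forall>y\<in>S. c \<bullet> y \<le> c \<bullet> v}"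
proof
  show "normal_cone (convex hull S) v \<subseteq> {c. \<forall>y\<in>S. c \<bullet> y \<le> c \<bullet> v}"
    unfolding normal_cone_def by (auto intro: hull_inc)
  show "{c. \<forall>y\<in>S. c \<bullet> y \<le> c \<bullet> v} \<subseteq> normal_cone (convex hull S) v"
  proof
    fix c
    assume "c \<in> {c. \<forall>y\<in>S. c \<bullet> y \<le> c \<bullet> v}"
    then have "convex hull S \<subseteq> {y. c \<bullet> y \<le> c \<bullet> v}"
      by (intro hull_minimal convex_halfspace_le) auto
    then show "c \<in> normal_cone (convex hull S) v"
      by (auto simp: normal_cone_def)
  qed
qed

lemma convex_normal_cone: "convex (normal_cone P v)"
proof -
  have "normal_cone P v = (\<Inter>y\<in>P. {c. (y - v) \<bullet> c \<le> 0})"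
    by (auto simp: normal_cone_def inner_diff_left inner_diff_right inner_commute)
  then show ?thesis
    by (simp add: convex_INT convex_halfspace_le)
qed

lemma cone_normal_cone: "cone (normal_cone P v)"
  by (auto simp: cone_def normal_cone_def mult_left_mono)

lemma polyhedron_normal_cone_convex_hull:
  assumes "finite S"
  shows "polyhedron (normal_cone (convex hull S) v)"
proof -
  have "normal_cone (convex hull S) v = (\<Inter>y\<in>S. {c. (y - v) \<bullet> c \<le> 0})"
    by (auto simp: normal_cone_convex_hull inner_diff_left inner_diff_right inner_commute)
  then show ?thesis
    using assms by (auto intro: polyhedron_Inter polyhedron_halfspace_le)
qed

lemma open_strict_normals:
  assumes "finite S"
  shows "open {c. \<forall>y\<in>S. c \<bullet> y < c \<bullet> v}"
proof -
  have "{c. \<forall>y\<in>S. c \<bullet> y < c \<bullet> v} = (\<Inter>y\<in>S. {c. (y - v) \<bullet> c < 0})"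
    by (auto simp: inner_diff_left inner_diff_right inner_commute)
  then show ?thesis
    using assms by (simp add: open_INT open_halfspace_lt)
qed

lemma in_interior_normal_cone_convex_hull:
  assumes "finite S" "\<forall>y\<in>S - {v}. c \<bullet> y < c \<bullet> v"
  shows "c \<in> interior (normal_cone (convex hull S) v)"
proof -
  have "{c. \<forall>y\<in>S - {v}. c \<bullet> y < c \<bullet> v} \<subseteq> normal_cone (convex hull S) v"
  proof (clarsimp simp: normal_cone_convex_hull)
    fix c y
    assume "\<forall>y\<in>S - {v}. c \<bullet> y < c \<bullet> v" "y \<in> S"
    then show "c \<bullet> y \<le> c \<bullet> v"
      by (cases "y = v") (auto dest: bspec[of _ _ y])
  qed
  moreover have "open {c. \<forall>y\<in>S - {v}. c \<bullet> y < c \<bullet> v}"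
    using assms(1) by (simp add: open_strict_normals)
  ultimately show ?thesis
    using assms(2) interior_maximal by blast
qed

lemma polytope_extreme_points:
  fixes P :: "'a::euclidean_space set"
  assumes "polytope P"
  shows "finite {x. x extreme_point_of P}" "P = convex hull {x. x extreme_point_of P}"
  using finite_polyhedron_extreme_points[OF polytope_imp_polyhedron[OF assms]]
    Krein_Milman_Minkowski[OF polytope_imp_compact[OF assms] polytope_imp_convex[OF assms]]
  by simp_all

lemma face_of_polytope_strictly_exposed:
  fixes P :: "'a::euclidean_space set"
  assumes "polytope P" "F face_of P" "v \<in> F"
  obtains c where "\<forall>y\<in>F. c \<bullet> y = c \<bullet> v" "\<forall>y\<in>P - F. c \<bullet> y < c \<bullet> v"
proof -
  have "F exposed_face_of P"
    using assms(1,2) exposed_face_of_polyhedron polytope_imp_polyhedron by blast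
  then consider "F = P"
    | a b where "P \<subseteq> {x. a \<bullet> x \<le> b}" "F = P \<inter> {x. a \<bullet> x = b}"
    using assms(3) unfolding exposed_face_of by auto
  then show ?thesis
  proof cases
    case 1
    then show ?thesis
      using that[of 0] by auto
  next
    case 2
    then have "a \<bullet> v = b"
      using assms(3) by blast
    show ?thesis
    proof (rule that[of a])
      show "\<forall>y\<in>F. a \<bullet> y = a \<bullet> v"
        using 2(2) \<open>a \<bullet> v = b\<close> by simp
      show "\<forall>y\<in>P - F. a \<bullet> y < a \<bullet> v"
      proof
        fix y
        assume "y \<in> P - F"
        then have "a \<bullet> y \<le> b" "a \<bullet> y \<noteq> b"
          using 2 by blast+
        then show "a \<bullet> y < a \<bullet> v"
          using \<open>a \<bullet> v = b\<close> by simp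
      qed
    qed
  qed
qed

lemma wall_of_polyhedral_cone:
  fixes N :: "'a::euclidean_space set"
  assumes "polyhedron N" "cone N" "aff_dim N = DIM('a)" "is_wall N W"
  obtains a where "a \<noteq> 0" "N \<subseteq> {x. a \<bullet> x \<le> 0}" "W = N \<inter> {x. a \<bullet> x = 0}"
proof -
  have "W \<noteq> {}"
    using assms(4) by (auto simp: is_wall_def)
  then have "W facet_of N"
    using assms(3,4) by (simp add: is_wall_def facet_of_def)
  then obtain a b where a: "a \<noteq> 0" "N \<subseteq> {x. a \<bullet> x \<le> b}" "W = N \<inter> {x. a \<bullet> x = b}"
    using facet_of_polyhedron[OF assms(1)] by blast
  obtain w where "w \<in> W"
    using \<open>W \<noteq> {}\<close> by blast
  have "0 \<in> N"
    using assms(2) \<open>w \<in> W\<close> a(3) cone_contains_0 by blast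
  then have "0 \<le> b"
    using a(2) by auto
  have "2 *\<^sub>R w \<in> N"
    using assms(2) \<open>w \<in> W\<close> a(3) by (simp add: cone_def)
  then have "2 * b \<le> b"
    using a \<open>w \<in> W\<close> by auto
  then have "b = 0"
    using \<open>0 \<le> b\<close> by simp
  then show ?thesis
    using that a by blast
qed

lemma supporting_hyperplane_through_rel_interior:
  fixes W :: "'a::euclidean_space set"
  assumes "convex W" "\<forall>x\<in>W. b \<bullet> x \<le> 0" "c \<in> rel_interior W" "b \<bullet> c = 0"
  shows "W \<subseteq> {x. b \<bullet> x = 0}"
proof -
  have "W \<inter> {x. b \<bullet> x = 0} face_of W"
    using assms(1,2) by (intro face_of_Int_supporting_hyperplane_le) auto
  moreover have "c \<in> W \<inter> {x. b \<bullet> x = 0}"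
    using assms(3,4) rel_interior_subset by blast
  ultimately have "W \<inter> {x. b \<bullet> x = 0} = W"
    using assms(3) face_of_disjoint_rel_interior by blast
  then show ?thesis
    by blast
qed

lemma is_wall_normal_cone_edge:
  fixes S :: "'a::euclidean_space set"
  assumes "finite S" "u \<in> S" "u \<noteq> v" "c \<bullet> u = c \<bullet> v" "\<forall>y\<in>S - {v, u}. c \<bullet> y < c \<bullet> v"
  shows "is_wall (normal_cone (convex hull S) v)
                 (normal_cone (convex hull S) v \<inter> {x. (u - v) \<bullet> x = 0})"
    (is "is_wall ?N ?W")
proof -
  let ?H = "{x. (u - v) \<bullet> x = 0}"
  let ?U = "{x. \<forall>y\<in>S - {v, u}. x \<bullet> y < x \<bullet> v}"
  have "?W face_of ?N"
    using assms(2)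
    by (intro face_of_Int_supporting_hyperplane_le convex_normal_cone)
       (auto simp: normal_cone_convex_hull inner_diff_left inner_diff_right inner_commute)
  have piece: "?H \<inter> ?U \<subseteq> ?W"
  proof (clarsimp simp: normal_cone_convex_hull)
    fix x y
    assume x: "(u - v) \<bullet> x = 0" "\<forall>y\<in>S - {v, u}. x \<bullet> y < x \<bullet> v" and "y \<in> S"
    have "x \<bullet> u = x \<bullet> v"
      using x(1) by (simp add: inner_diff_left inner_commute[of x])
    then show "x \<bullet> y \<le> x \<bullet> v"
      using x(2) \<open>y \<in> S\<close> by (cases "y \<in> {v, u}") (auto dest: bspec[of _ _ y])
  qed
  have "c \<in> ?H \<inter> ?U"
    using assms(4,5) by (simp add: inner_diff_left inner_diff_right inner_commute)
  then have "aff_dim ?H = aff_dim (?H \<inter> ?U)"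
    using assms(1) by (intro aff_dim_convex_Int_open[symmetric] convex_hyperplane open_strict_normals) auto
  also have "\<dots> \<le> aff_dim ?W"
    using aff_dim_subset[OF piece] .
  finally have "aff_dim ?H \<le> aff_dim ?W" .
  moreover have "aff_dim ?W \<le> aff_dim ?H"
    by (intro aff_dim_subset) blast
  ultimately have "aff_dim ?W = int DIM('a) - 1"
    using assms(3) by simp
  with \<open>?W face_of ?N\<close> show ?thesis
    by (simp add: is_wall_def)
qed

lemma interior_normal_cone_vertex_nonempty:
  fixes P :: "'a::euclidean_space set"
  assumes "polytope P" "v extreme_point_of P"
  shows "interior (normal_cone P v) \<noteq> {}"
proof -
  let ?V = "{x. x extreme_point_of P}"
  have "{v} face_of P"
    using assms(2) face_of_singleton by blast
  then obtain c where c: "\<forall>y\<in>P - {v}. c \<bullet> y < c \<bullet> v"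
    using face_of_polytope_strictly_exposed[OF assms(1)] by blast
  have "?V \<subseteq> P"
    using extreme_point_of_def by blast
  then have "c \<in> interior (normal_cone (convex hull ?V) v)"
    using c polytope_extreme_points(1)[OF assms(1)]
    by (intro in_interior_normal_cone_convex_hull) auto
  then show ?thesis
    using polytope_extreme_points(2)[OF assms(1)] by auto
qed

lemma wall_of_normal_cone_supporting_vertex:
  fixes S :: "'a::euclidean_space set"
  assumes "finite S" "interior (normal_cone (convex hull S) v) \<noteq> {}"
    and "is_wall (normal_cone (convex hull S) v) W" "c \<in> W"
  obtains u where "u \<in> S" "u \<noteq> v" "c \<bullet> u = c \<bullet> v"
proof -
  let ?N = "normal_cone (convex hull S) v"
  have W: "W face_of ?N" "aff_dim W = int DIM('a) - 1"
    using assms(3) by (auto simp: is_wall_def)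
  have "W \<noteq> ?N"
    using W(2) aff_dim_nonempty_interior[OF assms(2)] by auto
  then have "c \<notin> interior ?N"
    using face_of_disjoint_rel_interior[OF W(1)] interior_subset_rel_interior assms(4) by blast
  then obtain u where u: "u \<in> S - {v}" "\<not> c \<bullet> u < c \<bullet> v"
    using in_interior_normal_cone_convex_hull[OF assms(1)] by blast
  have "c \<in> ?N"
    using face_of_imp_subset[OF W(1)] assms(4) by blast
  then have "c \<bullet> u \<le> c \<bullet> v"
    using u(1) by (simp add: normal_cone_convex_hull)
  then show ?thesis
    using that u by force
qed

lemma polytope_face_eq_segment:
  fixes P :: "'a::euclidean_space set"
  assumes "polytope P" "F face_of P" "v \<in> F" "u \<in> F"
    and "\<And>z. z extreme_point_of P \<Longrightarrow> z \<in> F \<Longrightarrow> z = v \<or> z = u"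
  shows "F = closed_segment v u"
proof
  show "closed_segment v u \<subseteq> F"
    using assms(2-4) face_of_imp_convex convex_contains_segment by blast
  have "{z. z extreme_point_of F} \<subseteq> {v, u}"
    using assms(5) extreme_point_of_face[OF assms(2)] by blast
  then have "convex hull {z. z extreme_point_of F} \<subseteq> closed_segment v u"
    by (simp add: hull_mono segment_convex_hull)
  then show "F \<subseteq> closed_segment v u"
    using polytope_extreme_points(2)[OF face_of_polytope_polytope[OF assms(1,2)]] by simp
qed

lemma normal_cone_wall_vertex_parallel:
  fixes a :: "'a::euclidean_space"
  assumes "W \<subseteq> normal_cone P v" "convex W" "c \<in> rel_interior W"
    and "affine hull W = {x. a \<bullet> x = 0}" "a \<noteq> 0" "y \<in> P" "c \<bullet> y = c \<bullet> v"
  shows "y - v = (((y - v) \<bullet> a) / (a \<bullet> a)) *\<^sub>R a"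
proof (rule perp_hyperplane_imp_parallel[OF assms(5)])
  have "x \<bullet> y \<le> x \<bullet> v" if "x \<in> W" for x
    using assms(1,6) that unfolding normal_cone_def by blast
  then have "\<forall>x\<in>W. (y - v) \<bullet> x \<le> 0"
    by (simp add: inner_commute[of "y - v"] inner_diff_right)
  moreover have "(y - v) \<bullet> c = 0"
    using assms(7) by (simp add: inner_commute[of "y - v"] inner_diff_right)
  ultimately have "W \<subseteq> {x. (y - v) \<bullet> x = 0}"
    using supporting_hyperplane_through_rel_interior assms(2,3) by blast
  then have "affine hull W \<subseteq> {x. (y - v) \<bullet> x = 0}"
    by (intro hull_minimal affine_hyperplane)
  then show "h \<bullet> (y - v) = 0" if "a \<bullet> h = 0" for h
    using that assms(4) by (auto simp: inner_commute)
qed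

lemma graph_neighbor_is_wall_reflection:
  fixes P :: "'a::euclidean_space set"
  assumes "polytope P" "u \<in> graph_neighbors P v" "norm u = norm v"
  obtains W where "is_wall (normal_cone P v) W" "wall_reflection W v = u"
proof -
  define V where "V = {x. x extreme_point_of P}"
  define W where "W = normal_cone P v \<inter> {x. (u - v) \<bullet> x = 0}"
  have V: "finite V" "P = convex hull V"
    using polytope_extreme_points[OF assms(1)] by (simp_all add: V_def)
  have u: "u \<in> V" "u \<noteq> v" and edge: "closed_segment v u face_of P"
    using assms(2) by (auto simp: graph_neighbors_def V_def)
  obtain c where c_edge: "\<forall>y\<in>closed_segment v u. c \<bullet> y = c \<bullet> v"
    and c_strict: "\<forall>y\<in>P - closed_segment v u. c \<bullet> y < c \<bullet> v"
    using face_of_polytope_strictly_exposed[OF assms(1) edge ends_in_segment(1)] by blast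
  have strict: "\<forall>y\<in>V - {v, u}. c \<bullet> y < c \<bullet> v"
  proof
    fix y
    assume y: "y \<in> V - {v, u}"
    have "y \<notin> closed_segment v u"
      using y extreme_point_of_face[OF edge] extreme_point_of_segment by (auto simp: V_def)
    moreover have "y \<in> P"
      using y by (simp add: V(2) hull_inc)
    ultimately show "c \<bullet> y < c \<bullet> v"
      using c_strict by blast
  qed
  have "c \<bullet> u = c \<bullet> v"
    using c_edge ends_in_segment(2) by blast
  then have wall: "is_wall (normal_cone (convex hull V) v) W"
    unfolding W_def V(2) using is_wall_normal_cone_edge[OF V(1) u _ strict] by blast
  then have span: "span W = {x. (u - v) \<bullet> x = 0}"
    using u(2) by (intro span_eq_hyperplane) (auto simp: is_wall_def W_def)
  have "wall_reflection W v = u"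
    using wall_reflection_eq[of "u - v", OF _ span] u(2) assms(3)
      reflection_of_equal_norm[of "u - v" u v 1] by simp
  with wall show ?thesis
    using that V(2) by simp
qed

lemma normal_cone_wall_exposes_collinear_face:
  fixes P :: "'a::euclidean_space set"
  assumes "polytope P" "v extreme_point_of P" "is_wall (normal_cone P v) W"
  obtains a c u where "a \<noteq> 0" "span W = {x. a \<bullet> x = 0}" "c \<in> normal_cone P v"
    and "u extreme_point_of P" "u \<noteq> v" "c \<bullet> u = c \<bullet> v"
    and "\<And>y. y \<in> P \<Longrightarrow> c \<bullet> y = c \<bullet> v \<Longrightarrow> y - v = ((y - v) \<bullet> a / (a \<bullet> a)) *\<^sub>R a"
proof -
  define V where "V = {x. x extreme_point_of P}"
  have V: "finite V" "P = convex hull V"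
    using polytope_extreme_points[OF assms(1)] by (simp_all add: V_def)
  have interior: "interior (normal_cone (convex hull V) v) \<noteq> {}"
    using interior_normal_cone_vertex_nonempty[OF assms(1,2)] by (simp add: V(2)[symmetric])
  have wall: "is_wall (normal_cone (convex hull V) v) W"
    using assms(3) by (simp add: V(2)[symmetric])
  obtain a where a: "a \<noteq> 0" "W = normal_cone (convex hull V) v \<inter> {x. a \<bullet> x = 0}"
    using wall_of_polyhedral_cone[OF polyhedron_normal_cone_convex_hull[OF V(1)] cone_normal_cone
        aff_dim_nonempty_interior[OF interior] wall] .
  have W: "W face_of normal_cone P v" "aff_dim W = int DIM('a) - 1"
    using assms(3) by (auto simp: is_wall_def)
  have "W \<subseteq> {x. a \<bullet> x = 0}"
    using a(2) by blast
  then have hull_W: "affine hull W = {x. a \<bullet> x = 0}" and span_W: "span W = {x. a \<bullet> x = 0}"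
    using affine_hull_eq_hyperplane span_eq_hyperplane a(1) W(2) by blast+
  have "W \<noteq> {}"
    using W(2) by auto
  then obtain c where c: "c \<in> rel_interior W"
    using face_of_imp_convex[OF W(1)] rel_interior_eq_empty by blast
  have cW: "c \<in> W"
    using c rel_interior_subset by blast
  obtain u where u: "u \<in> V" "u \<noteq> v" "c \<bullet> u = c \<bullet> v"
    using wall_of_normal_cone_supporting_vertex[OF V(1) interior wall cW] by blast
  show ?thesis
  proof (rule that[OF a(1) span_W _ _ u(2,3)])
    show "c \<in> normal_cone P v"
      using cW face_of_imp_subset[OF W(1)] by blast
    show "u extreme_point_of P"
      using u(1) by (simp add: V_def)
    show "y - v = ((y - v) \<bullet> a / (a \<bullet> a)) *\<^sub>R a" if "y \<in> P" "c \<bullet> y = c \<bullet> v" for y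
      using normal_cone_wall_vertex_parallel[OF face_of_imp_subset[OF W(1)]
          face_of_imp_convex[OF W(1)] c hull_W a(1) that] .
  qed
qed

lemma wall_reflection_in_graph_neighbors:
  fixes P :: "'a::euclidean_space set"
  assumes "polytope P" "v extreme_point_of P"
    and "\<And>w. w extreme_point_of P \<Longrightarrow> norm w = norm v"
    and "is_wall (normal_cone P v) W"
  shows "wall_reflection W v \<in> graph_neighbors P v"
proof -
  obtain a c u where a: "a \<noteq> 0" "span W = {x. a \<bullet> x = 0}" and c: "c \<in> normal_cone P v"
    and u: "u extreme_point_of P" "u \<noteq> v" "c \<bullet> u = c \<bullet> v"
    and collinear: "\<And>y. y \<in> P \<Longrightarrow> c \<bullet> y = c \<bullet> v \<Longrightarrow> y - v = ((y - v) \<bullet> a / (a \<bullet> a)) *\<^sub>R a"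
    using normal_cone_wall_exposes_collinear_face[OF assms(1,2,4)] by blast
  have on_line: "y = v - (2 * (a \<bullet> v) / (a \<bullet> a)) *\<^sub>R a"
    if "y extreme_point_of P" "y \<noteq> v" "c \<bullet> y = c \<bullet> v" for y
  proof (rule reflection_of_equal_norm[OF a(1) collinear])
    show "y \<in> P"
      using that(1) by (simp add: extreme_point_of_def)
  qed (use that assms(3) in auto)
  have reflection: "wall_reflection W v = u"
    using on_line[OF u] wall_reflection_eq[OF a] by simp
  define F where "F = P \<inter> {y. c \<bullet> y = c \<bullet> v}"
  have F: "F face_of P"
    unfolding F_def using c
    by (intro face_of_Int_supporting_hyperplane_le polytope_imp_convex[OF assms(1)])
       (auto simp: normal_cone_def)
  have "F = closed_segment v u"
  proof (rule polytope_face_eq_segment[OF assms(1) F])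
    show "v \<in> F" "u \<in> F"
      using u assms(2) by (auto simp: F_def extreme_point_of_def)
    show "z = v \<or> z = u" if "z extreme_point_of P" "z \<in> F" for z
      using on_line[of z] on_line[OF u] that by (auto simp: F_def)
  qed
  then show ?thesis
    using F u reflection by (simp add: graph_neighbors_def)
qed

theorem corollary2p3:
  fixes P :: "'a::euclidean_space set" and v :: 'a and r :: real
  assumes "polytope P"
    and "\<And>w. w extreme_point_of P \<Longrightarrow> norm w = r"
    and "v extreme_point_of P"
  shows "graph_neighbors P v =
           {wall_reflection W v | W. is_wall (normal_cone P v) W}"
proof
  have sphere: "\<And>w. w extreme_point_of P \<Longrightarrow> norm w = norm v"
    using assms(2)[OF assms(3)] assms(2) by simp
  show "graph_neighbors P v \<subseteq> {wall_reflection W v | W. is_wall (normal_cone P v) W}"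
  proof
    fix u
    assume u: "u \<in> graph_neighbors P v"
    then have "norm u = norm v"
      using sphere by (simp add: graph_neighbors_def)
    then obtain W where "is_wall (normal_cone P v) W" "wall_reflection W v = u"
      using graph_neighbor_is_wall_reflection[OF assms(1) u] by blast
    then show "u \<in> {wall_reflection W v | W. is_wall (normal_cone P v) W}"
      by blast
  qed
  show "{wall_reflection W v | W. is_wall (normal_cone P v) W} \<subseteq> graph_neighbors P v"
    using wall_reflection_in_graph_neighbors[OF assms(1,3) sphere] by blast
qed

end
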